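(* Let $Q$ be a sequence, $G=(V,E,\delta)$ a pangenome graph, and $H$ the associated directed graph defined in the context. If $v_{(i_0,u_0,f_0)},v_{(i_1,u_1,f_1)},\dots,v_{(i_k,u_k,f_k)}$ is a directed path in $H$, then $Q_{i_0}Q_{i_1}\cdots Q_{i_k}$ is a common subsequence between $Q$ and $G$.
   Context: Strings are 0-indexed; $S_i$ is the character of $S$ at position $i$. A pangenome graph is a triple $G=(V,E,\delta)$ where $(V,E)$ is a finite directed graph and $\delta:V\to\Sigma^*\setminus\{\epsilon\}$ assigns to each vertex a nonempty string over an alphabet $\Sigma$. A path in $G$ is a sequence of vertices $P=w_0,\dots,w_k$ ($k\ge0$) with $(w_j,w_{j+1})\in E$ for $j<k$; $spell(P)=\delta(w_0)\cdots\delta(w_k)$. A sequence $S$ is a common subsequence between $Q$ and $G$ if there is a path $P$ in $G$ such that $S$ is a subsequence of both $Q$ and $spell(P)$. The directed graph $H$ has vertex set $\{v_{(i,u,f)}: 0\le i\le|Q|-1,\ u\in V,\ 0\le f\le|\delta(u)|-1,\ Q_i=\delta(u)_f\}$, and an edge from $v_{(i,u,f)}$ to $v_{(i',u',f')}$ if and only if $i<i'$ and either ($u\ne u'$ and there is a path from $u$ to $u'$ in $G$) or ($u=u'$ and $f<f'$). *)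

theory Defs
  imports Main "HOL-Library.Sublist"
begin

definition pangenome_graph :: "'v set \<Rightarrow> ('v \<times> 'v) set \<Rightarrow> ('v \<Rightarrow> 'c list) \<Rightarrow> bool" where
  "pangenome_graph V E \<delta> \<longleftrightarrow> finite V \<and> E \<subseteq> V \<times> V \<and> (\<forall>v\<in>V. \<delta> v \<noteq> [])"

definition is_path :: "'v set \<Rightarrow> ('v \<times> 'v) set \<Rightarrow> 'v list \<Rightarrow> bool" where
  "is_path V E P \<longleftrightarrow> P \<noteq> [] \<and> set P \<subseteq> V \<and> (\<forall>j. Suc j < length P \<longrightarrow> (P ! j, P ! Suc j) \<in> E)"

definition spell :: "('v \<Rightarrow> 'c list) \<Rightarrow> 'v list \<Rightarrow> 'c list" where
  "spell \<delta> P = concat (map \<delta> P)"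

definition common_subseq :: "'c list \<Rightarrow> 'v set \<Rightarrow> ('v \<times> 'v) set \<Rightarrow> ('v \<Rightarrow> 'c list) \<Rightarrow> 'c list \<Rightarrow> bool" where
  "common_subseq Q V E \<delta> S \<longleftrightarrow> (\<exists>P. is_path V E P \<and> subseq S Q \<and> subseq S (spell \<delta> P))"

definition has_path :: "'v set \<Rightarrow> ('v \<times> 'v) set \<Rightarrow> 'v \<Rightarrow> 'v \<Rightarrow> bool" where
  "has_path V E u u' \<longleftrightarrow> (\<exists>P. is_path V E P \<and> hd P = u \<and> last P = u')"

(* vertex set of H: triples (i, u, f) standing for v_(i,u,f) *)
definition H_vertices :: "'c list \<Rightarrow> 'v set \<Rightarrow> ('v \<Rightarrow> 'c list) \<Rightarrow> (nat \<times> 'v \<times> nat) set" where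
  "H_vertices Q V \<delta> = {(i, u, f). i < length Q \<and> u \<in> V \<and> f < length (\<delta> u) \<and> Q ! i = \<delta> u ! f}"

definition H_edges :: "'c list \<Rightarrow> 'v set \<Rightarrow> ('v \<times> 'v) set \<Rightarrow> ('v \<Rightarrow> 'c list) \<Rightarrow> ((nat \<times> 'v \<times> nat) \<times> (nat \<times> 'v \<times> nat)) set" where
  "H_edges Q V E \<delta> = {((i, u, f), (i', u', f')).
      (i, u, f) \<in> H_vertices Q V \<delta> \<and> (i', u', f') \<in> H_vertices Q V \<delta> \<and> i < i' \<and>
      ((u \<noteq> u' \<and> has_path V E u u') \<or> (u = u' \<and> f < f'))}"

end

theory Submission
  imports Defs
begin

text \<open>Follow the path in H backwards. Each vertex v_(i,u,f) of it is matched with a path P in G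
  starting at u, such that the letters of the remaining path form a subsequence both of Q from
  position i on and of spell P from position f on. For an edge of H with u = u' the same P
  serves, since f < f'; for u \<noteq> u' a path from u to u' is glued in front of P. In both cases
  the new letter Q_i = \<delta>(u)_f sits strictly before the positions used so far.\<close>

lemma suffix_drop_drop: "k \<le> j \<Longrightarrow> suffix (drop j xs) (drop k xs)"
  by (metis drop_drop le_add_diff_inverse2 suffix_drop)

lemma subseq_suffix_trans: "subseq S xs \<Longrightarrow> suffix xs ys \<Longrightarrow> subseq S ys"
  by (meson subseq_order.trans suffix_imp_subseq)

lemma subseq_Cons_nth_drop:
  "j < length xs \<Longrightarrow> subseq S (drop (Suc j) xs) \<Longrightarrow> subseq (xs ! j # S) (drop j xs)"
  by (simp flip: Cons_nth_drop_Suc)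

lemma is_path_singleton: "is_path V E [a] \<longleftrightarrow> a \<in> V"
  by (simp add: is_path_def)

lemma is_path_Cons_Cons:
  "is_path V E (a # b # xs) \<longleftrightarrow> a \<in> V \<and> (a, b) \<in> E \<and> is_path V E (b # xs)"
  by (auto simp: is_path_def less_Suc_eq_0_disj)

lemma is_path_butlast_append:
  "is_path V E R \<Longrightarrow> is_path V E P \<Longrightarrow> last R = hd P \<Longrightarrow> is_path V E (butlast R @ P)"
proof (induction R rule: induct_list012)
  case (3 x y zs)
  then show ?case
  proof (cases zs)
    case Nil
    with "3.prems" have "P = y # tl P"
      by (cases P) (auto simp: is_path_def)
    with Nil "3.prems" show ?thesis
      by (metis butlast.simps(2) append.simps is_path_Cons_Cons)
  qed (auto simp: is_path_Cons_Cons)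
qed (simp_all add: is_path_def)

lemma spell_hd_tl: "P \<noteq> [] \<Longrightarrow> spell \<delta> P = \<delta> (hd P) @ spell \<delta> (tl P)"
  by (cases P) (simp_all add: spell_def)

lemma H_edge_extend_path:
  assumes edge: "((i, u, f), (i', u', f')) \<in> H_edges Q V E \<delta>"
    and P: "is_path V E P" "hd P = u'"
  shows "\<exists>P'. is_path V E P' \<and> hd P' = u \<and> f < length (spell \<delta> P') \<and> spell \<delta> P' ! f = Q ! i
    \<and> suffix (drop f' (spell \<delta> P)) (drop (Suc f) (spell \<delta> P'))"
proof -
  from edge have f: "f < length (\<delta> u)" "Q ! i = \<delta> u ! f"
    and step: "(u \<noteq> u' \<and> has_path V E u u') \<or> (u = u' \<and> f < f')"
    by (auto simp: H_edges_def H_vertices_def)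
  have letter: "f < length (spell \<delta> P') \<and> spell \<delta> P' ! f = Q ! i"
    if "is_path V E P'" "hd P' = u" for P'
    using that f by (simp add: spell_hd_tl is_path_def nth_append)
  from step show ?thesis
  proof
    assume "u = u' \<and> f < f'"
    then show ?thesis
      using P letter by (intro exI[of _ P]) (auto intro: suffix_drop_drop)
  next
    assume "u \<noteq> u' \<and> has_path V E u u'"
    then obtain R where R: "is_path V E R" "hd R = u" "last R = u'" "u \<noteq> u'"
      by (auto simp: has_path_def)
    then have "butlast R = u # butlast (tl R)"
      by (cases R) (auto simp: is_path_def)
    then have R_spell: "length (\<delta> u) \<le> length (spell \<delta> (butlast R))"
      and P': "is_path V E (butlast R @ P)" "hd (butlast R @ P) = u"
      using is_path_butlast_append[OF R(1) P(1)] R P by (simp_all add: spell_hd_tl)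
    have "drop (Suc f) (spell \<delta> (butlast R @ P)) = drop (Suc f) (spell \<delta> (butlast R)) @ spell \<delta> P"
      using f R_spell by (simp add: spell_def)
    then have "suffix (drop f' (spell \<delta> P)) (drop (Suc f) (spell \<delta> (butlast R @ P)))"
      by (metis suffix_appendI suffix_drop)
    then show ?thesis
      using P' letter by blast
  qed
qed

lemma H_path_letters_subseq:
  assumes "is_path (H_vertices Q V \<delta>) (H_edges Q V E \<delta>) ((i, u, f) # p)"
  shows "\<exists>P. is_path V E P \<and> hd P = u
    \<and> subseq (map (\<lambda>(j, _, _). Q ! j) ((i, u, f) # p)) (drop i Q)
    \<and> subseq (map (\<lambda>(j, _, _). Q ! j) ((i, u, f) # p)) (drop f (spell \<delta> P))"
  using assms
proof (induction p arbitrary: i u f)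
  case Nil
  then have "i < length Q" "u \<in> V" "f < length (\<delta> u)" "Q ! i = \<delta> u ! f"
    by (auto simp: is_path_singleton H_vertices_def)
  then have "subseq [Q ! i] (drop i Q)" "subseq [Q ! i] (drop f (spell \<delta> [u]))"
    using subseq_Cons_nth_drop[of i Q] subseq_Cons_nth_drop[of f "\<delta> u"] by (simp_all add: spell_def)
  with \<open>u \<in> V\<close> show ?case
    by (intro exI[of _ "[u]"]) (simp add: is_path_singleton)
next
  case (Cons x p)
  obtain i' u' f' where x: "x = (i', u', f')"
    by (cases x)
  from Cons.prems x have edge: "((i, u, f), (i', u', f')) \<in> H_edges Q V E \<delta>"
    and tail: "is_path (H_vertices Q V \<delta>) (H_edges Q V E \<delta>) ((i', u', f') # p)"
    by (simp_all add: is_path_Cons_Cons)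
  from edge have i: "i < length Q" "i < i'"
    by (auto simp: H_edges_def H_vertices_def)
  obtain P where P: "is_path V E P" "hd P = u'"
    and in_Q: "subseq (map (\<lambda>(j, _, _). Q ! j) (x # p)) (drop i' Q)"
    and in_P: "subseq (map (\<lambda>(j, _, _). Q ! j) (x # p)) (drop f' (spell \<delta> P))"
    using Cons.IH[OF tail] x by blast
  obtain P' where P': "is_path V E P'" "hd P' = u" "f < length (spell \<delta> P')"
      "spell \<delta> P' ! f = Q ! i" "suffix (drop f' (spell \<delta> P)) (drop (Suc f) (spell \<delta> P'))"
    using H_edge_extend_path[OF edge P] by blast
  have "subseq (map (\<lambda>(j, _, _). Q ! j) (x # p)) (drop (Suc i) Q)"
    using in_Q suffix_drop_drop[of "Suc i" i' Q] i by (simp add: subseq_suffix_trans)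
  moreover have "subseq (map (\<lambda>(j, _, _). Q ! j) (x # p)) (drop (Suc f) (spell \<delta> P'))"
    using in_P P'(5) by (rule subseq_suffix_trans)
  moreover have "map (\<lambda>(j, _, _). Q ! j) ((i, u, f) # x # p) = Q ! i # map (\<lambda>(j, _, _). Q ! j) (x # p)"
    by simp
  ultimately show ?case
    using P' i subseq_Cons_nth_drop[of i Q] subseq_Cons_nth_drop[of f "spell \<delta> P'"] by metis
qed

theorem lemma3:
  fixes Q :: "'c list" and V :: "'v set" and E :: "('v \<times> 'v) set" and \<delta> :: "'v \<Rightarrow> 'c list"
    and p :: "(nat \<times> 'v \<times> nat) list"
  assumes "pangenome_graph V E \<delta>"
    and "is_path (H_vertices Q V \<delta>) (H_edges Q V E \<delta>) p"
  shows "common_subseq Q V E \<delta> (map (\<lambda>(i, u, f). Q ! i) p)"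
proof -
  obtain i u f p' where p: "p = (i, u, f) # p'"
    using assms(2) by (cases p) (auto simp: is_path_def)
  then obtain P where "is_path V E P"
    and "subseq (map (\<lambda>(i, u, f). Q ! i) p) (drop i Q)"
    and "subseq (map (\<lambda>(i, u, f). Q ! i) p) (drop f (spell \<delta> P))"
    using H_path_letters_subseq[of Q V \<delta> E i u f p'] assms(2) by auto
  then show ?thesis
    unfolding common_subseq_def by (meson subseq_suffix_trans suffix_drop)
qed

end
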